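(* Let $\varphi:S^1\to S^1$ be a minimal orientation preserving circle homeomorphism with lift $\Phi$, and for $x_0\in\mathbb{R}$ let $\Gamma(x_0)$ be the curlicue generated by the orbit $u_n=\Phi^n(x_0)$. Then either $\Gamma(x_0)$ is bounded for every $x_0$, or $\Gamma(x_0)$ is unbounded for every $x_0$. Moreover, in the bounded case there is a closed curve $\tau=u(S^1)$, where $u:S^1\to\mathbb{C}$ is a continuous function, whose shape does not depend on $x_0$, such that for every $x_0$ the vertices of $\Gamma(x_0)$ lie on the translate $\tau-u(x_0)$ of $\tau$.
   Context: Identify $S^1=\mathbb{R}/\mathbb{Z}$ via $x\mapsto\exp(2\pi\imath x)$; a lift of $\varphi$ is a homeomorphism $\Phi:\mathbb{R}\to\mathbb{R}$ with $\Phi(x+1)=\Phi(x)+1$ projecting to $\varphi$. For a real sequence $u=(u_n)_{n\ge0}$, the curlicue is the piecewise linear curve in $\mathbb{C}$ passing consecutively through $z_0=0$ and $z_n=\sum_{k=0}^{n-1}\exp(2\pi\imath u_k)$, $n\ge1$; these $z_n$ are its vertices. A curve is bounded if it has finite diameter. *)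

theory Defs
  imports "HOL-Analysis.Analysis"
begin

definition circ :: "real \<Rightarrow> complex" where
  "circ x = exp (2 * pi * \<i> * complex_of_real x)"

definition circle_homeo :: "(complex \<Rightarrow> complex) \<Rightarrow> bool" where
  "circle_homeo \<phi> \<longleftrightarrow> (\<exists>\<psi>. homeomorphism (sphere 0 1) (sphere 0 1) \<phi> \<psi>)"

definition is_lift :: "(complex \<Rightarrow> complex) \<Rightarrow> (real \<Rightarrow> real) \<Rightarrow> bool" where
  "is_lift \<phi> \<Phi> \<longleftrightarrow> (\<exists>\<Psi>. homeomorphism UNIV UNIV \<Phi> \<Psi>) \<and>
     (\<forall>x. \<Phi> (x + 1) = \<Phi> x + 1) \<and> (\<forall>x. \<phi> (circ x) = circ (\<Phi> x))"

text \<open>Orientation preserving: (some, equivalently every) lift is increasing.\<close>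
definition orientation_preserving :: "(complex \<Rightarrow> complex) \<Rightarrow> bool" where
  "orientation_preserving \<phi> \<longleftrightarrow> (\<exists>\<Phi>. is_lift \<phi> \<Phi> \<and> strict_mono \<Phi>)"

definition minimal_circle :: "(complex \<Rightarrow> complex) \<Rightarrow> bool" where
  "minimal_circle \<phi> \<longleftrightarrow>
     (\<forall>z\<in>sphere 0 1. closure {(\<phi> ^^ n) z | n. True} = sphere 0 1)"

definition curlicue_vertex :: "(nat \<Rightarrow> real) \<Rightarrow> nat \<Rightarrow> complex" where
  "curlicue_vertex u n = (\<Sum>k<n. exp (2 * pi * \<i> * complex_of_real (u k)))"

definition curlicue :: "(nat \<Rightarrow> real) \<Rightarrow> complex set" where
  "curlicue u = (\<Union>n. closed_segment (curlicue_vertex u n) (curlicue_vertex u (Suc n)))"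

end

theory Submission
  imports Defs
begin

text \<open>The vertices of the curlicue of the orbit of x0 are the Birkhoff sums
  z + phi z + ... + phi^(n-1) z of the identity along the phi-orbit of z = circ x0. By the
  Gottschalk--Hedlund theorem, if the Birkhoff sums of a continuous function over a minimal
  homeomorphism of a compact space are bounded at a single point, the function is a continuous
  coboundary: z = g (phi z) - g z with g continuous. The sums then telescope to
  g (phi^n z) - g z for every starting point, so every curlicue is bounded and its vertices lie
  on the translate of the closed curve g(S^1) by - g z.

  For Gottschalk--Hedlund, the skew product (x, v) to (T x, v + f x) leaves the compact closure of
  the orbit of (x0, 0) invariant. A minimal closed invariant subset M of it projects onto the
  whole base, since T is minimal, and meets each fibre only once; so M is the graph of a function
  g, continuous because its graph is compact, and invariance of the graph is the equation
  g (T x) = g x + f x.\<close>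

lemma funpow_in_invariant_set:
  assumes "T ` X \<subseteq> X" "x \<in> X"
  shows "(T ^^ n) x \<in> X"
  by (induction n) (use assms in auto)

definition minimal_closed_invariant :: "('a::topological_space \<Rightarrow> 'a) \<Rightarrow> 'a set \<Rightarrow> bool" where
  "minimal_closed_invariant F M \<longleftrightarrow> M \<noteq> {} \<and> closed M \<and> F ` M \<subseteq> M \<and>
     (\<forall>S. S \<subseteq> M \<longrightarrow> S \<noteq> {} \<longrightarrow> closed S \<longrightarrow> F ` S \<subseteq> S \<longrightarrow> S = M)"

lemma minimal_closed_invariantD:
  assumes "minimal_closed_invariant F M" "S \<subseteq> M" "S \<noteq> {}" "closed S" "F ` S \<subseteq> S"
  shows "S = M"
  using assms unfolding minimal_closed_invariant_def by blast

lemma exists_minimal_closed_invariant_subset: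
  fixes F :: "'a::heine_borel \<Rightarrow> 'a"
  assumes "compact K" "K \<noteq> {}" "F ` K \<subseteq> K"
  obtains M where "M \<subseteq> K" "minimal_closed_invariant F M"
proof -
  define A where "A = {S. S \<subseteq> K \<and> S \<noteq> {} \<and> closed S \<and> F ` S \<subseteq> S}"
  have po: "partial_order_on A (relation_of (\<lambda>S T. T \<subseteq> S) A)"
    unfolding partial_order_on_def preorder_on_def refl_on_def trans_def antisym_def relation_of_def
    by auto
  have "\<exists>M\<in>A. \<forall>S\<in>A. S \<subseteq> M \<longrightarrow> S = M"
  proof (rule predicate_Zorn[OF po])
    fix C assume C: "C \<in> Chains (relation_of (\<lambda>S T. T \<subseteq> S) A)"
    then have CA: "C \<subseteq> A" by (rule Chains_relation_of)
    show "\<exists>L\<in>A. \<forall>S\<in>C. L \<subseteq> S"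
    proof (cases "C = {}")
      case True
      then show ?thesis using assms compact_imp_closed unfolding A_def by auto
    next
      case False
      have compact: "compact S" if "S \<in> C" for S
      proof -
        have "S \<subseteq> K" "closed S" using that CA unfolding A_def by auto
        then show ?thesis
          using compact_Int_closed[OF assms(1)] by (metis inf.absorb2)
      qed
      have chain: "S \<subseteq> T \<or> T \<subseteq> S" if "S \<in> C \<and> T \<in> C" for S T
        using C that unfolding Chains_def relation_of_def by blast
      have "\<Inter>C \<noteq> {}"
        by (rule compact_chain[OF compact _ chain]) (use CA in \<open>auto simp: A_def\<close>)
      moreover have "\<Inter>C \<subseteq> K" "closed (\<Inter>C)"
        using False CA unfolding A_def by auto
      moreover have "F ` \<Inter>C \<subseteq> \<Inter>C"
        using CA unfolding A_def by blast
      ultimately show ?thesis unfolding A_def by blast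
    qed
  qed
  then obtain M where M: "M \<in> A" and minimal: "\<And>S. S \<in> A \<Longrightarrow> S \<subseteq> M \<Longrightarrow> S = M"
    by blast
  have "M \<subseteq> K" using M unfolding A_def by simp
  moreover have "minimal_closed_invariant F M"
    unfolding minimal_closed_invariant_def
  proof (intro conjI allI impI)
    show "M \<noteq> {}" "closed M" "F ` M \<subseteq> M" using M unfolding A_def by simp_all
    fix S assume "S \<subseteq> M" "S \<noteq> {}" "closed S" "F ` S \<subseteq> S"
    with \<open>M \<subseteq> K\<close> show "S = M" using minimal[of S] unfolding A_def by blast
  qed
  ultimately show thesis by (rule that)
qed

lemma bounded_multiples_imp_zero:
  fixes c :: "'a::real_normed_vector"
  assumes bound: "\<And>k::nat. norm (v - real k *\<^sub>R c) \<le> B"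
  shows "c = 0"
proof (rule ccontr)
  assume "c \<noteq> 0"
  then obtain k :: nat where k: "norm v + B < real k * norm c"
    using reals_Archimedean3[of "norm c"] by auto
  have "real k * norm c = norm (real k *\<^sub>R c)" by simp
  also have "\<dots> \<le> norm v + norm (v - real k *\<^sub>R c)"
    using norm_triangle_ineq4[of v "v - real k *\<^sub>R c"] by simp
  also have "\<dots> \<le> norm v + B" using bound by simp
  finally show False using k by simp
qed

definition skew_product :: "('a \<Rightarrow> 'a) \<Rightarrow> ('a \<Rightarrow> 'b::plus) \<Rightarrow> 'a \<times> 'b \<Rightarrow> 'a \<times> 'b" where
  "skew_product T f = (\<lambda>p. (T (fst p), snd p + f (fst p)))"

lemma funpow_skew_product:
  fixes f :: "'a \<Rightarrow> 'b::comm_monoid_add"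
  shows "(skew_product T f ^^ n) (x, v) = ((T ^^ n) x, v + (\<Sum>k<n. f ((T ^^ k) x)))"
  by (induction n) (simp_all add: skew_product_def add.assoc)

lemma skew_product_translate:
  fixes T :: "'a::monoid_add \<Rightarrow> 'a" and f :: "'a \<Rightarrow> 'b::ab_semigroup_add"
  shows "skew_product T f ((0, c) + p) = (0, c) + skew_product T f p"
  by (cases p) (simp add: skew_product_def add.assoc)

lemma continuous_on_skew_product:
  fixes T :: "'a::topological_space \<Rightarrow> 'a" and f :: "'a \<Rightarrow> 'b::topological_monoid_add"
  assumes "continuous_on X T" "continuous_on X f"
  shows "continuous_on (X \<times> UNIV) (skew_product T f)"
proof -
  have "continuous_on (X \<times> UNIV) (\<lambda>p. T (fst p))"
    by (rule continuous_on_compose2[OF assms(1) continuous_on_fst[OF continuous_on_id]]) auto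
  moreover have "continuous_on (X \<times> UNIV) (\<lambda>p. snd p + f (fst p))"
    by (intro continuous_on_add continuous_on_snd continuous_on_id
        continuous_on_compose2[OF assms(2) continuous_on_fst[OF continuous_on_id]]) auto
  ultimately show ?thesis
    unfolding skew_product_def by (rule continuous_on_Pair)
qed

text \<open>Translations in the fibre commute with the skew product, so they permute its minimal
  sets; a bounded minimal set meeting its own translate by c must equal it, which forces c = 0.\<close>
lemma minimal_invariant_set_of_skew_product_single_valued:
  fixes f :: "'a::real_normed_vector \<Rightarrow> 'b::real_normed_vector"
  assumes "bounded M" and minimal: "minimal_closed_invariant (skew_product T f) M"
    and "(x, v) \<in> M" "(x, w) \<in> M"
  shows "v = w"
proof -
  have "closed M" and invariant: "skew_product T f ` M \<subseteq> M"
    using minimal unfolding minimal_closed_invariant_def by simp_all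
  define c where "c = w - v"
  define S where "S = M \<inter> (+) (0, c) ` M"
  have "S = M"
  proof (rule minimal_closed_invariantD[OF minimal])
    show "S \<subseteq> M" unfolding S_def by blast
    have "(x, w) = (0, c) + (x, v)" by (simp add: c_def)
    then show "S \<noteq> {}" using assms(3,4) unfolding S_def by blast
    show "closed S" unfolding S_def using \<open>closed M\<close> by (intro closed_Int closed_translation)
    show "skew_product T f ` S \<subseteq> S"
    proof (rule image_subsetI)
      fix p assume p: "p \<in> S"
      then obtain q where q: "q \<in> M" "p = (0, c) + q" unfolding S_def by blast
      have "skew_product T f p = (0, c) + skew_product T f q"
        using q(2) skew_product_translate by simp
      moreover have "skew_product T f q \<in> M" "skew_product T f p \<in> M"
        using q(1) p invariant unfolding S_def by blast+
      ultimately show "skew_product T f p \<in> S" unfolding S_def by blast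
    qed
  qed
  then have "M \<subseteq> (+) (0, c) ` M" unfolding S_def by (metis Int_lower2)
  have down: "(y, s - c) \<in> M" if ys: "(y, s) \<in> M" for y s
  proof -
    obtain q where q: "q \<in> M" "(y, s) = (0, c) + q"
      using ys \<open>M \<subseteq> (+) (0, c) ` M\<close> by blast
    then have "q = (y, s) - (0, c)" by (metis add_diff_cancel_left')
    with q(1) show ?thesis by simp
  qed
  have multiples: "(x, v - real k *\<^sub>R c) \<in> M" for k
  proof (induction k)
    case (Suc k)
    have "v - real (Suc k) *\<^sub>R c = (v - real k *\<^sub>R c) - c"
      by (simp add: scaleR_add_left)
    then show ?case using down[OF Suc] by (simp only:)
  qed (use assms(3) in simp)
  obtain B where B: "\<And>p. p \<in> M \<Longrightarrow> norm p \<le> B"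
    using assms(1) unfolding bounded_iff by blast
  have "c = 0"
  proof (rule bounded_multiples_imp_zero)
    fix k :: nat
    show "norm (v - real k *\<^sub>R c) \<le> B"
      by (rule order_trans[OF norm_snd_le B[OF multiples]])
  qed
  then show ?thesis by (simp add: c_def)
qed

lemma invariant_set_of_skew_product_covers_base:
  fixes T :: "'a::t2_space \<Rightarrow> 'a" and f :: "'a \<Rightarrow> 'b::{comm_monoid_add,topological_space}"
  assumes "compact M" "M \<noteq> {}" "skew_product T f ` M \<subseteq> M" "fst ` M \<subseteq> X"
    and minimal_T: "\<And>z. z \<in> X \<Longrightarrow> X \<subseteq> closure (range (\<lambda>n. (T ^^ n) z))"
  shows "fst ` M = X"
proof
  obtain p where "p \<in> M" using assms(2) by blast
  then obtain x v where xv: "(x, v) \<in> M" by (metis prod.collapse)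
  have "(T ^^ n) x \<in> fst ` M" for n
  proof -
    have "(skew_product T f ^^ n) (x, v) \<in> M" by (rule funpow_in_invariant_set[OF assms(3) xv])
    then have "fst ((skew_product T f ^^ n) (x, v)) \<in> fst ` M" by (rule imageI)
    then show ?thesis by (simp add: funpow_skew_product)
  qed
  then have "range (\<lambda>n. (T ^^ n) x) \<subseteq> fst ` M" by (rule image_subsetI)
  moreover have "closed (fst ` M)"
    by (intro compact_imp_closed compact_continuous_image continuous_on_fst continuous_on_id assms(1))
  ultimately have "closure (range (\<lambda>n. (T ^^ n) x)) \<subseteq> fst ` M"
    by (rule closure_minimal)
  moreover have "x \<in> X" using imageI[OF xv, of fst] assms(4) by auto
  ultimately show "X \<subseteq> fst ` M" using minimal_T by blast
qed (rule assms(4))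

lemma minimal_invariant_set_of_skew_product_is_graph:
  fixes T :: "'a::euclidean_space \<Rightarrow> 'a" and f :: "'a \<Rightarrow> 'b::euclidean_space"
  assumes "compact X"
    and minimal_T: "\<And>z. z \<in> X \<Longrightarrow> X \<subseteq> closure (range (\<lambda>n. (T ^^ n) z))"
    and "M \<subseteq> X \<times> cball 0 B" and minimal_M: "minimal_closed_invariant (skew_product T f) M"
  obtains g where "continuous_on X g" "\<And>x. x \<in> X \<Longrightarrow> g (T x) = g x + f x"
proof -
  have M: "M \<subseteq> X \<times> cball 0 B" "M \<noteq> {}" "closed M" "skew_product T f ` M \<subseteq> M"
    using assms(3) minimal_M unfolding minimal_closed_invariant_def by simp_all
  have "bounded M"
    by (rule bounded_subset[OF compact_imp_bounded[OF compact_Times[OF \<open>compact X\<close> compact_cball]] M(1)])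
  with M(3) have "compact M" by (simp add: compact_eq_bounded_closed)
  moreover have "fst ` M \<subseteq> X" using M(1) by auto
  ultimately have base: "fst ` M = X"
    by (rule invariant_set_of_skew_product_covers_base[OF _ M(2,4) _ minimal_T])
  define g where "g x = (SOME v. (x, v) \<in> M)" for x
  have g_in: "(x, g x) \<in> M" if "x \<in> X" for x
  proof -
    from that base obtain p where "p \<in> M" "x = fst p" by blast
    then have "(x, snd p) \<in> M" by simp
    then show ?thesis unfolding g_def by (rule someI)
  qed
  have graph: "M = (\<lambda>x. (x, g x)) ` X"
  proof (intro equalityI subsetI)
    fix p assume "p \<in> M"
    then have "fst p \<in> X" using base by blast
    have p_pair: "(fst p, snd p) \<in> M" using \<open>p \<in> M\<close> by simp
    have "snd p = g (fst p)"
      by (rule minimal_invariant_set_of_skew_product_single_valued[OF \<open>bounded M\<close> minimal_M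
            p_pair g_in[OF \<open>fst p \<in> X\<close>]])
    then have "p = (\<lambda>x. (x, g x)) (fst p)" by (simp add: prod_eq_iff)
    then show "p \<in> (\<lambda>x. (x, g x)) ` X" using \<open>fst p \<in> X\<close> by (rule image_eqI)
  next
    fix p assume "p \<in> (\<lambda>x. (x, g x)) ` X"
    with g_in show "p \<in> M" by blast
  qed
  have "continuous_on X g"
  proof (rule continuous_from_closed_graph[OF compact_cball])
    show "g \<in> X \<rightarrow> cball 0 B" using g_in M(1) by blast
    show "closed ((\<lambda>x. (x, g x)) ` X)" using M(3) graph by simp
  qed
  moreover have "g (T x) = g x + f x" if "x \<in> X" for x
  proof -
    have "(T x, g x + f x) \<in> M"
      using subsetD[OF M(4) imageI[OF g_in[OF that]]] by (simp add: skew_product_def)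
    then obtain y where "(T x, g x + f x) = (y, g y)" unfolding graph by blast
    then show ?thesis by simp
  qed
  ultimately show thesis by (rule that)
qed

theorem Gottschalk_Hedlund:
  fixes T :: "'a::euclidean_space \<Rightarrow> 'a" and f :: "'a \<Rightarrow> 'b::euclidean_space"
  assumes "compact X" and T: "continuous_on X T" "T ` X \<subseteq> X"
    and minimal_T: "\<And>z. z \<in> X \<Longrightarrow> X \<subseteq> closure (range (\<lambda>n. (T ^^ n) z))"
    and f: "continuous_on X f"
    and "x0 \<in> X" and bounded_sums: "\<And>n. norm (\<Sum>k<n. f ((T ^^ k) x0)) \<le> B"
  obtains g where "continuous_on X g" "\<And>x. x \<in> X \<Longrightarrow> g (T x) = g x + f x"
proof -
  define F where "F = skew_product T f"
  define orbit where "orbit = range (\<lambda>n. (F ^^ n) (x0, 0))"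
  have "(F ^^ n) (x0, 0) \<in> X \<times> cball 0 B" for n
    using funpow_in_invariant_set[OF T(2) \<open>x0 \<in> X\<close>] bounded_sums
    by (simp add: F_def funpow_skew_product mem_cball_0)
  then have orbit_sub: "orbit \<subseteq> X \<times> cball 0 B" unfolding orbit_def by blast
  have compact_box: "compact (X \<times> cball (0::'b) B)"
    by (rule compact_Times[OF \<open>compact X\<close> compact_cball])
  have closure_sub: "closure orbit \<subseteq> X \<times> cball 0 B"
    by (rule closure_minimal[OF orbit_sub compact_imp_closed[OF compact_box]])
  have "bounded orbit"
    by (rule bounded_subset[OF compact_imp_bounded[OF compact_box] orbit_sub])
  then have "compact (closure orbit)" by (simp add: compact_closure)
  moreover have "closure orbit \<noteq> {}" unfolding orbit_def by simp
  moreover have "F ` closure orbit \<subseteq> closure orbit"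
  proof (rule image_closure_subset)
    have "closure orbit \<subseteq> X \<times> UNIV" using closure_sub by blast
    then show "continuous_on (closure orbit) F"
      unfolding F_def by (rule continuous_on_subset[OF continuous_on_skew_product[OF T(1) f]])
    show "F ` orbit \<subseteq> closure orbit"
    proof (rule image_subsetI)
      fix p assume "p \<in> orbit"
      then obtain n where "p = (F ^^ n) (x0, 0)" unfolding orbit_def by blast
      then have "F p = (F ^^ Suc n) (x0, 0)" by simp
      then have "F p \<in> orbit" unfolding orbit_def by (rule range_eqI)
      then show "F p \<in> closure orbit" by (rule subsetD[OF closure_subset])
    qed
  qed simp
  ultimately show thesis
  proof (rule exists_minimal_closed_invariant_subset)
    fix M assume "M \<subseteq> closure orbit" and minimal_M: "minimal_closed_invariant F M"
    from this(1) closure_sub have M_sub: "M \<subseteq> X \<times> cball 0 B" by (rule order_trans)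
    show thesis
    proof (rule minimal_invariant_set_of_skew_product_is_graph[OF \<open>compact X\<close> minimal_T M_sub
          minimal_M[unfolded F_def]])
      fix g assume "continuous_on X g" "\<And>x. x \<in> X \<Longrightarrow> g (T x) = g x + f x"
      then show thesis by (rule that)
    qed
  qed
qed

lemma circ_in_sphere: "circ x \<in> sphere 0 1"
  by (simp add: circ_def norm_exp_eq_Re)

lemma bounded_curlicue_iff: "bounded (curlicue u) \<longleftrightarrow> bounded (range (curlicue_vertex u))"
proof
  assume "bounded (curlicue u)"
  moreover have "range (curlicue_vertex u) \<subseteq> curlicue u"
    unfolding curlicue_def using ends_in_segment(1) by blast
  ultimately show "bounded (range (curlicue_vertex u))" by (rule bounded_subset)
next
  assume "bounded (range (curlicue_vertex u))"
  then obtain B where B: "\<And>n. curlicue_vertex u n \<in> cball 0 B"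
    unfolding bounded_iff by (auto simp: mem_cball_0)
  have "closed_segment (curlicue_vertex u n) (curlicue_vertex u (Suc n)) \<subseteq> cball 0 B" for n
    by (rule closed_segment_subset[OF B B convex_cball])
  then have "curlicue u \<subseteq> cball 0 B" unfolding curlicue_def by blast
  then show "bounded (curlicue u)" using bounded_cball bounded_subset by blast
qed

lemma funpow_lift:
  assumes "is_lift \<phi> \<Phi>"
  shows "(\<phi> ^^ n) (circ x) = circ ((\<Phi> ^^ n) x)"
  using assms by (induction n) (simp_all add: is_lift_def)

lemma curlicue_vertex_orbit:
  assumes "is_lift \<phi> \<Phi>"
  shows "curlicue_vertex (\<lambda>k. (\<Phi> ^^ k) x0) n = (\<Sum>k<n. (\<phi> ^^ k) (circ x0))"
  unfolding curlicue_vertex_def funpow_lift[OF assms] by (simp add: circ_def)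

lemma curlicue_vertex_coboundary:
  assumes "is_lift \<phi> \<Phi>" and coboundary: "\<forall>z\<in>sphere 0 1. g (\<phi> z) = g z + z"
  shows "curlicue_vertex (\<lambda>k. (\<Phi> ^^ k) x0) n = g (circ ((\<Phi> ^^ n) x0)) - g (circ x0)"
proof (induction n)
  case (Suc n)
  have "g (circ ((\<Phi> ^^ Suc n) x0)) = g (circ ((\<Phi> ^^ n) x0)) + circ ((\<Phi> ^^ n) x0)"
    using bspec[OF coboundary circ_in_sphere] funpow_lift[OF assms(1), of "Suc 0"] by simp
  with Suc show ?case by (simp add: curlicue_vertex_def circ_def)
qed (simp add: curlicue_vertex_def)

lemma curlicue_vertex_in_translate:
  assumes "is_lift \<phi> \<Phi>" and "\<forall>z\<in>sphere 0 1. g (\<phi> z) = g z + z"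
  shows "curlicue_vertex (\<lambda>k. (\<Phi> ^^ k) x0) n \<in> (\<lambda>w. w - g (circ x0)) ` g ` sphere 0 1"
proof -
  have "g (circ ((\<Phi> ^^ n) x0)) \<in> g ` sphere 0 1" by (rule imageI[OF circ_in_sphere])
  then show ?thesis unfolding curlicue_vertex_coboundary[OF assms] by blast
qed

lemma coboundary_imp_bounded_curlicue:
  assumes "is_lift \<phi> \<Phi>" "continuous_on (sphere 0 1) g"
    and "\<forall>z\<in>sphere 0 1. g (\<phi> z) = g z + z"
  shows "bounded (curlicue (\<lambda>n. (\<Phi> ^^ n) x0))"
proof -
  have "bounded ((\<lambda>w. w - g (circ x0)) ` g ` sphere 0 1)"
    by (intro bounded_translation_minus compact_imp_bounded compact_continuous_image
        assms(2) compact_sphere)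
  then show ?thesis
    unfolding bounded_curlicue_iff
    by (rule bounded_subset) (use curlicue_vertex_in_translate[OF assms(1,3)] in blast)
qed

lemma bounded_curlicue_imp_coboundary:
  assumes "circle_homeo \<phi>" "minimal_circle \<phi>" "is_lift \<phi> \<Phi>"
    and "bounded (curlicue (\<lambda>n. (\<Phi> ^^ n) x0))"
  obtains g where "continuous_on (sphere 0 1) g" "\<forall>z\<in>sphere 0 1. g (\<phi> z) = g z + z"
proof -
  obtain \<psi> where "homeomorphism (sphere 0 1) (sphere 0 1) \<phi> \<psi>"
    using assms(1) unfolding circle_homeo_def by blast
  then have continuous: "continuous_on (sphere 0 1) \<phi>" and into: "\<phi> ` sphere 0 1 \<subseteq> sphere 0 1"
    unfolding homeomorphism_def by auto
  have minimal: "sphere 0 1 \<subseteq> closure (range (\<lambda>n. (\<phi> ^^ n) z))" if "z \<in> sphere 0 1" for z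
    using assms(2) that unfolding minimal_circle_def by (simp add: full_SetCompr_eq)
  from assms(4) have "bounded (range (curlicue_vertex (\<lambda>n. (\<Phi> ^^ n) x0)))"
    by (simp only: bounded_curlicue_iff)
  then obtain B where "\<And>n. norm (curlicue_vertex (\<lambda>k. (\<Phi> ^^ k) x0) n) \<le> B"
    unfolding bounded_iff by blast
  then have bounded_sums: "\<And>n. norm (\<Sum>k<n. (\<phi> ^^ k) (circ x0)) \<le> B"
    by (simp only: curlicue_vertex_orbit[OF assms(3)])
  show thesis
  proof (rule Gottschalk_Hedlund[OF compact_sphere continuous into minimal continuous_on_id
        circ_in_sphere bounded_sums])
    fix g assume "continuous_on (sphere 0 1) g" "\<And>z. z \<in> sphere 0 1 \<Longrightarrow> g (\<phi> z) = g z + z"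
    then show thesis using that by blast
  qed
qed

theorem corollary3p6:
  fixes \<phi> :: "complex \<Rightarrow> complex" and \<Phi> :: "real \<Rightarrow> real"
  assumes "circle_homeo \<phi>"
    and "orientation_preserving \<phi>"
    and "minimal_circle \<phi>"
    and "is_lift \<phi> \<Phi>"
  shows "((\<forall>x0. bounded (curlicue (\<lambda>n. (\<Phi> ^^ n) x0))) \<or>
          (\<forall>x0. \<not> bounded (curlicue (\<lambda>n. (\<Phi> ^^ n) x0))))
       \<and> ((\<forall>x0. bounded (curlicue (\<lambda>n. (\<Phi> ^^ n) x0))) \<longrightarrow>
          (\<exists>u :: complex \<Rightarrow> complex. continuous_on (sphere 0 1) u \<and>
             (\<forall>x0 n. curlicue_vertex (\<lambda>k. (\<Phi> ^^ k) x0) n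
                \<in> (\<lambda>w. w - u (circ x0)) ` (u ` sphere 0 1))))"
proof (cases "\<exists>x0. bounded (curlicue (\<lambda>n. (\<Phi> ^^ n) x0))")
  case True
  then obtain x0 where "bounded (curlicue (\<lambda>n. (\<Phi> ^^ n) x0))" by blast
  then obtain g where g: "continuous_on (sphere 0 1) g" "\<forall>z\<in>sphere 0 1. g (\<phi> z) = g z + z"
    by (rule bounded_curlicue_imp_coboundary[OF assms(1,3,4)])
  have "\<forall>x0. bounded (curlicue (\<lambda>n. (\<Phi> ^^ n) x0))"
    using coboundary_imp_bounded_curlicue[OF assms(4) g] by blast
  moreover have "\<forall>x0 n. curlicue_vertex (\<lambda>k. (\<Phi> ^^ k) x0) n \<in> (\<lambda>w. w - g (circ x0)) ` g ` sphere 0 1"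
    using curlicue_vertex_in_translate[OF assms(4) g(2)] by blast
  ultimately show ?thesis using g(1) by blast
qed blast

end
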